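(* Let $\mathcal{A}=\{H_1,\dots,H_n\}$ be a central arrangement in $\mathbb{Q}^l$ with $H_i=\alpha_i^{-1}(0)$, where the $\alpha_i\in S_\mathbb{Z}=\mathbb{Z}[x_1,\dots,x_l]$ are linear forms such that no prime number divides any $\alpha_i$; regard it as the multiarrangement $(\mathcal{A},\mathbf{1})$ with all multiplicities $1$. Let $Q(\mathcal{A})=\prod_i\alpha_i$ and let $J(\mathcal{A})_\mathbb{Z}$ be the ideal of $S_\mathbb{Z}$ generated by $Q(\mathcal{A})$ and its partial derivatives $\partial Q(\mathcal{A})/\partial x_j$, $j=1,\dots,l$. Let $p$ be a good prime for $\mathcal{A}$. Then $p$ is a zero divisor of $S_\mathbb{Z}/J(\mathcal{A})_\mathbb{Z}$ if and only if $p$ is a zero divisor of $\operatorname{coker}(\varphi_\mathbb{Z})$.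
   Context: $\pi_p$ is reduction mod $p$ on $S_\mathbb{Z}$; $p$ is good if $\pi_p(\alpha_i)\ne\pi_p(\alpha_j)$ for all $i\ne j$. Let $M\subseteq S_\mathbb{Z}^n$ be the submodule generated by $\alpha_ie_i$, $i=1,\dots,n$, $A(\mathcal{A})=(\partial\alpha_i/\partial x_j)_{i,j}$, and $\varphi_\mathbb{Z}\colon S_\mathbb{Z}^l\to S_\mathbb{Z}^n/M$, $(g_1,\dots,g_l)^t\mapsto A(\mathcal{A})(g_1,\dots,g_l)^t$. $p$ is a zero divisor of an $S_\mathbb{Z}$-module $N$ if $pv=0$ for some nonzero $v\in N$. *)

theory Defs
  imports Complex_Main "HOL-Library.Poly_Mapping" "HOL-Computational_Algebra.Primes" "HOL-Number_Theory.Cong"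
begin

text \<open>S_Z = Z[x_j | j :: 'v], 'v a finite type of l = CARD('v) variables.
  Polynomials are finitely supported maps from monomials (exponent vectors) to int.\<close>
type_synonym 'v mpoly_int = "('v \<Rightarrow>\<^sub>0 nat) \<Rightarrow>\<^sub>0 int"

definition var :: "'v \<Rightarrow> 'v mpoly_int" where
  "var j = Poly_Mapping.single (Poly_Mapping.single j 1) 1"

definition const :: "int \<Rightarrow> 'v mpoly_int" where
  "const c = Poly_Mapping.single 0 c"

definition pderiv_mp :: "'v \<Rightarrow> 'v mpoly_int \<Rightarrow> 'v mpoly_int" where
  "pderiv_mp j f = (\<Sum>m\<in>Poly_Mapping.keys f. if Poly_Mapping.lookup m j = 0 then 0 else
      Poly_Mapping.single (m - Poly_Mapping.single j 1) (int (Poly_Mapping.lookup m j) * Poly_Mapping.lookup f m))"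

definition linform :: "('v::finite \<Rightarrow> int) \<Rightarrow> 'v mpoly_int" where
  "linform a = (\<Sum>j\<in>UNIV. const (a j) * var j)"

definition hyperplane :: "('v::finite \<Rightarrow> int) \<Rightarrow> ('v \<Rightarrow> rat) set" where
  "hyperplane a = {x. (\<Sum>j\<in>UNIV. of_int (a j) * x j) = 0}"

definition red_mod :: "int \<Rightarrow> ('v \<Rightarrow> int) \<Rightarrow> ('v \<Rightarrow> int)" where
  "red_mod p a = (\<lambda>j. a j mod p)"

definition good_prime :: "int \<Rightarrow> nat \<Rightarrow> (nat \<Rightarrow> 'v \<Rightarrow> int) \<Rightarrow> bool" where
  "good_prime p n a \<longleftrightarrow> prime p \<and> (\<forall>i<n. \<forall>k<n. i \<noteq> k \<longrightarrow> red_mod p (a i) \<noteq> red_mod p (a k))"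

definition defpoly :: "nat \<Rightarrow> (nat \<Rightarrow> 'v::finite \<Rightarrow> int) \<Rightarrow> 'v mpoly_int" where
  "defpoly n a = (\<Prod>i<n. linform (a i))"

definition jac_ideal :: "nat \<Rightarrow> (nat \<Rightarrow> 'v::finite \<Rightarrow> int) \<Rightarrow> 'v mpoly_int set" where
  "jac_ideal n a = {c * defpoly n a + (\<Sum>j\<in>UNIV. d j * pderiv_mp j (defpoly n a)) | c d. True}"

definition zero_divisor_quot :: "int \<Rightarrow> 'v mpoly_int set \<Rightarrow> bool" where
  "zero_divisor_quot p I \<longleftrightarrow> (\<exists>f. f \<notin> I \<and> const p * f \<in> I)"

text \<open>Vectors of S_Z^n are functions nat => S_Z, only components i < n matter.
  The submodule M + im(A(A)) of S_Z^n, where M is generated by alpha_i e_i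
  and A(A)_{ij} = d alpha_i / d x_j.  coker(phi_Z) = S_Z^n / (M + im A).\<close>
definition coker_rel :: "nat \<Rightarrow> (nat \<Rightarrow> 'v::finite \<Rightarrow> int) \<Rightarrow> (nat \<Rightarrow> 'v mpoly_int) set" where
  "coker_rel n a = {u. \<exists>h g. \<forall>i<n.
      u i = h i * linform (a i) + (\<Sum>j\<in>UNIV. pderiv_mp j (linform (a i)) * g j)}"

definition zero_divisor_coker :: "int \<Rightarrow> nat \<Rightarrow> (nat \<Rightarrow> 'v::finite \<Rightarrow> int) \<Rightarrow> bool" where
  "zero_divisor_coker p n a \<longleftrightarrow>
     (\<exists>v. v \<notin> coker_rel n a \<and> (\<lambda>i. const p * v i) \<in> coker_rel n a)"

end

theory Submission
  imports Defs "HOL-Library.Countable"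
begin

(* Write Q_i for the product of the forms other than \<alpha>_i.  Since dQ/dx_j = \<Sum>_i a_ij Q_i, the ideal J is
   generated by Q and the sums \<Sum>_i \<alpha>_i(g) Q_i, so w \<mapsto> \<Sum>_i w_i Q_i maps the relations M + im A(\<A>) of
   coker(\<phi>) into J.  Each \<alpha>_i is a prime element not dividing Q_i, hence the preimage of J is exactly
   M + im A(\<A>): coker(\<phi>) embeds into S/J and p-torsion passes from the cokernel to S/J.

   Conversely, if no two forms are proportional modulo p, each (p, \<alpha>_i) is a prime ideal not containing
   Q_i; with Gauss's lemma this makes the ideal (Q, Q_1, ..., Q_n) saturated with respect to p, so a p-torsion
   class of S/J is represented by some \<Sum>_i w_i Q_i with w p-torsion in the cokernel.  If instead
   \<alpha>_2 = \<beta> \<alpha>_1 + p^(e+1) \<alpha>_u with e maximal, a 2x2 minor of (\<alpha>_1, \<alpha>_u) that is nonzero modulo p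
   yields an explicit p-torsion element of the cokernel, supported on the forms proportional to \<alpha>_1 modulo p
   and multiplied by the product of the remaining forms.

   That (q, \<alpha>) is prime for q = 0 or q prime and \<alpha> primitive follows by running Euclid's algorithm on the
   coefficients of \<alpha> through unimodular changes of variables until some coefficient is a unit; the
   corresponding variable can then be eliminated. *)

section \<open>Prime ideals with two generators\<close>

definition ideal2 :: "'a::comm_ring_1 \<Rightarrow> 'a \<Rightarrow> 'a set" where
  "ideal2 x y = {x * s + y * t | s t. True}"

definition prime_ideal :: "'a::comm_ring_1 set \<Rightarrow> bool" where
  "prime_ideal I \<longleftrightarrow> 1 \<notin> I \<and> (\<forall>u v. u * v \<in> I \<longrightarrow> u \<in> I \<or> v \<in> I)"

lemma ideal2_0_left: "z \<in> ideal2 0 y \<longleftrightarrow> y dvd z"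
  by (auto simp: ideal2_def dvd_def)

lemma ideal2_0_right: "z \<in> ideal2 x 0 \<longleftrightarrow> x dvd z"
  by (auto simp: ideal2_def dvd_def)

lemma ideal2_left: "x * s \<in> ideal2 x y"
  unfolding ideal2_def by (metis (mono_tags, lifting) add_0_right mem_Collect_eq mult_zero_right)

lemma ideal2_right: "y * t \<in> ideal2 x y"
  unfolding ideal2_def by (metis (mono_tags, lifting) add_0_left mem_Collect_eq mult_zero_right)

lemma ideal2_add:
  assumes "u \<in> ideal2 x y" "v \<in> ideal2 x y"
  shows "u + v \<in> ideal2 x y"
proof -
  obtain s t s' t' where "u = x * s + y * t" "v = x * s' + y * t'"
    using assms by (auto simp: ideal2_def)
  then have "u + v = x * (s + s') + y * (t + t')"
    by (simp add: algebra_simps)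
  then show ?thesis by (auto simp: ideal2_def)
qed

lemma ideal2_mult:
  assumes "u \<in> ideal2 x y"
  shows "w * u \<in> ideal2 x y"
proof -
  obtain s t where "u = x * s + y * t"
    using assms by (auto simp: ideal2_def)
  then have "w * u = x * (w * s) + y * (w * t)"
    by (simp add: algebra_simps)
  then show ?thesis by (auto simp: ideal2_def)
qed

lemma ideal2_diff: "u \<in> ideal2 x y \<Longrightarrow> v \<in> ideal2 x y \<Longrightarrow> u - v \<in> ideal2 x y"
  using ideal2_add[of u x y "(- 1) * v"] ideal2_mult[of v x y "- 1"] by simp

lemma ideal2_sum: "(\<And>i. i \<in> K \<Longrightarrow> f i \<in> ideal2 x y) \<Longrightarrow> sum f K \<in> ideal2 x y"
  by (induction K rule: infinite_finite_induct)
    (auto intro: ideal2_add simp: ideal2_left[of x 0, simplified])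

lemma ideal2_dvd: "y dvd u \<Longrightarrow> u \<in> ideal2 x y"
  by (auto simp: ideal2_right)

lemma ideal2_dvd_right:
  assumes "y' dvd y" "z \<in> ideal2 x y"
  shows "z \<in> ideal2 x y'"
proof -
  obtain k s t where "y = y' * k" "z = x * s + y * t"
    using assms by (auto simp: ideal2_def elim!: dvdE)
  then have "z = x * s + y' * (k * t)"
    by (simp add: mult.assoc)
  then show ?thesis
    by (auto simp: ideal2_def)
qed

lemma prime_idealD: "prime_ideal I \<Longrightarrow> u * v \<in> I \<Longrightarrow> u \<in> I \<or> v \<in> I"
  by (simp add: prime_ideal_def)

lemma prime_ideal_prod:
  assumes "prime_ideal I" "\<And>k. k \<in> K \<Longrightarrow> f k \<notin> I"
  shows "prod f K \<notin> I"
  using assms(2)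
proof (induction K rule: infinite_finite_induct)
  case (insert k K)
  then show ?case using prime_idealD[OF assms(1)] by auto
qed (use assms(1) in \<open>auto simp: prime_ideal_def\<close>)

section \<open>Polynomials as integer combinations of monomials\<close>

lemma const_eq_of_int: "const c = of_int c"
  by (metis const_def of_int_eq_id id_apply single_of_int)

lemma const_0 [simp]: "const 0 = 0"
  by (simp add: const_def)

lemma const_eq_0_iff [simp]: "const c = (0 :: 'v mpoly_int) \<longleftrightarrow> c = 0"
  by (simp add: const_eq_of_int)

lemma frag_cmul_eq_const_mult: "frag_cmul c X = const c * (X :: 'v mpoly_int)"
proof -
  have "const c * X = Poly_Mapping.map ((*) c) X"
    by (simp add: const_def mult_map_scale_conv_mult)
  then show ?thesis
    by (intro poly_mapping_eqI) (simp add: map.rep_eq when_def)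
qed

lemma lookup_const_mult: "Poly_Mapping.lookup (const c * X) m = c * Poly_Mapping.lookup X m"
  by (simp flip: frag_cmul_eq_const_mult)

lemma const_dvd_iff: "const q dvd (X :: 'v mpoly_int) \<longleftrightarrow> (\<forall>m. q dvd Poly_Mapping.lookup X m)"
proof
  assume "const q dvd X"
  then show "\<forall>m. q dvd Poly_Mapping.lookup X m"
    by (auto simp: lookup_const_mult elim!: dvdE)
next
  assume dvd: "\<forall>m. q dvd Poly_Mapping.lookup X m"
  have "X = const q * Poly_Mapping.map (\<lambda>c. c div q) X"
    by (intro poly_mapping_eqI) (use dvd in \<open>simp add: lookup_const_mult map.rep_eq when_def\<close>)
  then show "const q dvd X"
    by (metis dvd_triv_left)
qed

lemma sum_single_lookup: "(\<Sum>m\<in>Poly_Mapping.keys X. Poly_Mapping.single m (Poly_Mapping.lookup X m)) = X"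
  by (rule poly_mapping_eqI) (simp add: lookup_sum lookup_single when_def in_keys_iff)

lemma lookup_mult_sum:
  fixes X Y :: "'m::comm_monoid_add \<Rightarrow>\<^sub>0 int"
  shows "Poly_Mapping.lookup (X * Y) k =
    (\<Sum>a\<in>Poly_Mapping.keys X. \<Sum>b\<in>Poly_Mapping.keys Y.
      if a + b = k then Poly_Mapping.lookup X a * Poly_Mapping.lookup Y b else 0)"
proof -
  have "X * Y = (\<Sum>a\<in>Poly_Mapping.keys X. \<Sum>b\<in>Poly_Mapping.keys Y.
      Poly_Mapping.single (a + b) (Poly_Mapping.lookup X a * Poly_Mapping.lookup Y b))"
    by (subst (1 2) sum_single_lookup[symmetric]) (simp only: sum_product mult_single)
  then show ?thesis
    by (simp add: lookup_sum lookup_single when_def)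
qed

lemma frag_extend_mult:
  fixes f :: "'m::comm_monoid_add \<Rightarrow> 'n::comm_monoid_add \<Rightarrow>\<^sub>0 int"
  assumes "\<And>a b. f (a + b) = f a * f b"
  shows "frag_extend f (X * Y) = frag_extend f X * frag_extend f Y"
  using subset_UNIV
proof (induction X rule: frag_induction)
  case (one a)
  show ?case
    using subset_UNIV
  proof (induction Y rule: frag_induction)
    case (one b)
    then show ?case by (simp add: mult_single assms)
  next
    case (diff Y Y')
    then show ?case by (simp add: right_diff_distrib frag_extend_diff)
  qed simp
next
  case (diff X X')
  then show ?case by (simp add: left_diff_distrib frag_extend_diff)
qed simp

lemma frag_extend_derivation:
  fixes D :: "'m::comm_monoid_add \<Rightarrow> 'm \<Rightarrow>\<^sub>0 int"
  assumes "\<And>a b. D (a + b) = D a * frag_of b + frag_of a * D b"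
  shows "frag_extend D (X * Y) = frag_extend D X * Y + X * frag_extend D Y"
  using subset_UNIV
proof (induction X rule: frag_induction)
  case (one a)
  show ?case
    using subset_UNIV
  proof (induction Y rule: frag_induction)
    case (one b)
    then show ?case by (simp add: mult_single assms)
  next
    case (diff Y Y')
    then show ?case by (simp add: algebra_simps frag_extend_diff)
  qed simp
next
  case (diff X X')
  then show ?case by (simp add: algebra_simps frag_extend_diff)
qed simp

section \<open>Gauss's lemma\<close>

text \<open>Leading monomials are taken with respect to the lexicographic order on
  \<^typ>\<open>nat \<Rightarrow>\<^sub>0 nat\<close>, pulled back along the following injective additive encoding.\<close>

definition encode_monomial :: "('v::finite \<Rightarrow>\<^sub>0 nat) \<Rightarrow> (nat \<Rightarrow>\<^sub>0 nat)" where
  "encode_monomial m = (\<Sum>v\<in>UNIV. Poly_Mapping.single (to_nat v) (Poly_Mapping.lookup m v))"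

lemma encode_monomial_add: "encode_monomial (a + b) = encode_monomial a + encode_monomial b"
  by (simp add: encode_monomial_def lookup_add single_add sum.distrib)

lemma lookup_encode_monomial:
  "Poly_Mapping.lookup (encode_monomial m) (to_nat v) = Poly_Mapping.lookup m v"
proof -
  have "Poly_Mapping.lookup (encode_monomial m) (to_nat v) =
      (\<Sum>w\<in>UNIV. if w = v then Poly_Mapping.lookup m w else 0)"
    unfolding encode_monomial_def lookup_sum
    by (rule sum.cong) (auto simp: lookup_single when_def)
  then show ?thesis by simp
qed

lemma inj_encode_monomial: "inj encode_monomial"
  by (rule injI, rule poly_mapping_eqI) (metis lookup_encode_monomial)

lemma lookup_mult_leading:
  fixes A B :: "'v::finite mpoly_int"
  assumes "\<forall>a\<in>Poly_Mapping.keys A. encode_monomial a \<le> encode_monomial a0"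
    and "\<forall>b\<in>Poly_Mapping.keys B. encode_monomial b \<le> encode_monomial b0"
  shows "Poly_Mapping.lookup (A * B) (a0 + b0) = Poly_Mapping.lookup A a0 * Poly_Mapping.lookup B b0"
proof -
  have only_leading: "a = a0 \<and> b = b0"
    if "a \<in> Poly_Mapping.keys A" "b \<in> Poly_Mapping.keys B" "a + b = a0 + b0" for a b
  proof -
    have "encode_monomial a \<le> encode_monomial a0" "encode_monomial b \<le> encode_monomial b0"
      using that assms by auto
    moreover have "encode_monomial a + encode_monomial b = encode_monomial a0 + encode_monomial b0"
      using that(3) by (metis encode_monomial_add)
    ultimately have "encode_monomial a = encode_monomial a0" "encode_monomial b = encode_monomial b0"
      by (metis add_less_le_mono add_le_less_mono order.not_eq_order_implies_strict less_irrefl)+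
    then show ?thesis
      using inj_encode_monomial by (auto dest: injD)
  qed
  have "Poly_Mapping.lookup (A * B) (a0 + b0) = (\<Sum>a\<in>Poly_Mapping.keys A. \<Sum>b\<in>Poly_Mapping.keys B.
      if a = a0 \<and> b = b0 then Poly_Mapping.lookup A a * Poly_Mapping.lookup B b else 0)"
    unfolding lookup_mult_sum by (intro sum.cong refl) (use only_leading in auto)
  also have "\<dots> = (\<Sum>a\<in>Poly_Mapping.keys A. if a = a0 then (\<Sum>b\<in>Poly_Mapping.keys B.
      if b = b0 then Poly_Mapping.lookup A a0 * Poly_Mapping.lookup B b0 else 0) else 0)"
    by (intro sum.cong refl) auto
  also have "\<dots> = Poly_Mapping.lookup A a0 * Poly_Mapping.lookup B b0"
    by (simp add: sum.delta in_keys_iff)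
  finally show ?thesis .
qed

lemma split_at_leading_monomial:
  fixes X :: "'v::finite mpoly_int"
  assumes "\<not> const q dvd X"
  obtains a0 X1 X2 where "X = X1 + X2" "const q dvd X2" "\<not> q dvd Poly_Mapping.lookup X1 a0"
    "\<forall>m\<in>Poly_Mapping.keys X1. encode_monomial m \<le> encode_monomial a0"
proof -
  let ?F = "{a. \<not> q dvd Poly_Mapping.lookup X a}"
  have "finite ?F"
    by (rule finite_subset[of _ "Poly_Mapping.keys X"]) (auto simp: in_keys_iff)
  moreover have "?F \<noteq> {}"
    using assms by (auto simp: const_dvd_iff)
  ultimately have "Max (encode_monomial ` ?F) \<in> encode_monomial ` ?F"
    by simp
  then obtain a0 where a0: "a0 \<in> ?F" "encode_monomial a0 = Max (encode_monomial ` ?F)"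
    by auto
  have a0_max: "encode_monomial a \<le> encode_monomial a0" if "a \<in> ?F" for a
    using a0(2) \<open>finite ?F\<close> that by simp
  define X1 where "X1 = Poly_Mapping.mapp
    (\<lambda>m c. if encode_monomial m \<le> encode_monomial a0 then c else 0) X"
  have X1: "Poly_Mapping.lookup X1 m =
      (if encode_monomial m \<le> encode_monomial a0 then Poly_Mapping.lookup X m else 0)" for m
    by (simp add: X1_def lookup_mapp when_def in_keys_iff)
  have "q dvd Poly_Mapping.lookup (X - X1) m" for m
  proof (cases "encode_monomial m \<le> encode_monomial a0")
    case False
    then have "q dvd Poly_Mapping.lookup X m"
      using a0_max by blast
    with False show ?thesis
      by (simp add: lookup_minus X1)
  qed (simp add: lookup_minus X1)
  then have "const q dvd X - X1"
    by (simp add: const_dvd_iff)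
  moreover have "\<forall>m\<in>Poly_Mapping.keys X1. encode_monomial m \<le> encode_monomial a0"
    by (auto simp: in_keys_iff X1 split: if_splits)
  ultimately show ?thesis
    using a0 by (intro that[of X1 "X - X1" a0]) (simp_all add: X1)
qed

lemma const_dvd_multD:
  fixes X Y :: "'v::finite mpoly_int"
  assumes q: "q = 0 \<or> prime q" and XY: "const q dvd X * Y"
  shows "const q dvd X \<or> const q dvd Y"
proof (rule ccontr)
  assume "\<not> ?thesis"
  then have "\<not> const q dvd X" "\<not> const q dvd Y" by auto
  obtain a0 X1 X2 where X: "X = X1 + X2" "const q dvd X2" "\<not> q dvd Poly_Mapping.lookup X1 a0"
    "\<forall>m\<in>Poly_Mapping.keys X1. encode_monomial m \<le> encode_monomial a0"
    using \<open>\<not> const q dvd X\<close> by (rule split_at_leading_monomial)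
  obtain b0 Y1 Y2 where Y: "Y = Y1 + Y2" "const q dvd Y2" "\<not> q dvd Poly_Mapping.lookup Y1 b0"
    "\<forall>m\<in>Poly_Mapping.keys Y1. encode_monomial m \<le> encode_monomial b0"
    using \<open>\<not> const q dvd Y\<close> by (rule split_at_leading_monomial)
  have "X * Y - X1 * Y1 = X2 * Y + X1 * Y2"
    unfolding X(1) Y(1) by (simp add: algebra_simps)
  then have "const q dvd X * Y - X1 * Y1"
    using X(2) Y(2) by simp
  from dvd_diff[OF XY this] have "const q dvd X1 * Y1"
    by simp
  then have "q dvd Poly_Mapping.lookup (X1 * Y1) (a0 + b0)"
    by (simp add: const_dvd_iff)
  then have "q dvd Poly_Mapping.lookup X1 a0 * Poly_Mapping.lookup Y1 b0"
    by (simp add: lookup_mult_leading X(4) Y(4))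
  with q X(3) Y(3) show False
    by (auto dest: prime_dvd_multD)
qed

lemma const_dvd_1_iff: "const q dvd (1 :: 'v mpoly_int) \<longleftrightarrow> q dvd 1"
  unfolding const_dvd_iff by (auto simp: lookup_one when_def)

lemma mpoly_mult_eq_0_iff: "X * Y = (0 :: 'v::finite mpoly_int) \<longleftrightarrow> X = 0 \<or> Y = 0"
  using const_dvd_multD[of 0 X Y] by (auto simp: const_def)

lemma prime_ideal_const:
  assumes "q = 0 \<or> prime q"
  shows "prime_ideal (ideal2 (const q) (0 :: 'v::finite mpoly_int))"
proof -
  have "\<not> const q dvd (1 :: 'v mpoly_int)"
    using assms by (auto simp: const_dvd_1_iff)
  then show ?thesis
    using const_dvd_multD[OF assms] by (auto simp: prime_ideal_def ideal2_0_right)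
qed

section \<open>Partial derivatives\<close>

definition pderiv_monom :: "'v \<Rightarrow> ('v \<Rightarrow>\<^sub>0 nat) \<Rightarrow> 'v mpoly_int" where
  "pderiv_monom j m =
    Poly_Mapping.single (m - Poly_Mapping.single j 1) (int (Poly_Mapping.lookup m j))"

lemma frag_cmul_single: "frag_cmul c (Poly_Mapping.single k d) = Poly_Mapping.single k (c * d)"
  by (rule poly_mapping_eqI) (simp add: lookup_single when_def)

lemma pderiv_mp_eq_frag_extend: "pderiv_mp j = frag_extend (pderiv_monom j)"
  unfolding pderiv_mp_def frag_extend_def pderiv_monom_def
  by (intro ext sum.cong) (auto simp: frag_cmul_single mult.commute)

lemma pderiv_mp_0 [simp]: "pderiv_mp j 0 = 0"
  by (simp add: pderiv_mp_def)

lemma monomial_diff_add: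
  fixes a b :: "'v \<Rightarrow>\<^sub>0 nat"
  assumes "Poly_Mapping.lookup a j \<noteq> 0"
  shows "a - Poly_Mapping.single j 1 + b = a + b - Poly_Mapping.single j 1"
proof (rule poly_mapping_eqI)
  fix k
  show "Poly_Mapping.lookup (a - Poly_Mapping.single j 1 + b) k =
      Poly_Mapping.lookup (a + b - Poly_Mapping.single j 1) k"
    using assms by (cases "k = j") (simp_all add: lookup_add lookup_minus lookup_single)
qed

lemma pderiv_monom_add:
  "pderiv_monom j (a + b) = pderiv_monom j a * frag_of b + frag_of a * pderiv_monom j b"
proof -
  have "Poly_Mapping.single (a - Poly_Mapping.single j 1 + b) (int (Poly_Mapping.lookup a j)) =
      Poly_Mapping.single (a + b - Poly_Mapping.single j 1) (int (Poly_Mapping.lookup a j))"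
    using monomial_diff_add[of a j b] by (cases "Poly_Mapping.lookup a j = 0") simp_all
  moreover have "Poly_Mapping.single (b - Poly_Mapping.single j 1 + a) (int (Poly_Mapping.lookup b j)) =
      Poly_Mapping.single (a + b - Poly_Mapping.single j 1) (int (Poly_Mapping.lookup b j))"
    using monomial_diff_add[of b j a] by (cases "Poly_Mapping.lookup b j = 0") (simp_all add: add.commute)
  ultimately show ?thesis
    by (simp add: pderiv_monom_def mult_single lookup_add single_add add.commute)
qed

lemma pderiv_mp_mult: "pderiv_mp j (X * Y) = pderiv_mp j X * Y + X * pderiv_mp j Y"
  unfolding pderiv_mp_eq_frag_extend by (rule frag_extend_derivation[OF pderiv_monom_add])

lemma pderiv_mp_add: "pderiv_mp j (X + Y) = pderiv_mp j X + pderiv_mp j Y"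
  by (simp add: pderiv_mp_eq_frag_extend frag_extend_add)

lemma pderiv_mp_sum: "pderiv_mp j (\<Sum>i\<in>I. F i) = (\<Sum>i\<in>I. pderiv_mp j (F i))"
  by (induction I rule: infinite_finite_induct) (simp_all add: pderiv_mp_add)

lemma pderiv_mp_const [simp]: "pderiv_mp j (const c :: 'v mpoly_int) = 0"
proof -
  have "const c = frag_cmul c (frag_of 0 :: 'v mpoly_int)"
    by (simp add: frag_cmul_eq_const_mult)
  then have "pderiv_mp j (const c) = frag_cmul c (pderiv_monom j 0)"
    unfolding pderiv_mp_eq_frag_extend by (simp only: frag_extend_cmul frag_extend_of)
  then show ?thesis
    by (simp add: pderiv_monom_def)
qed

lemma pderiv_mp_1 [simp]: "pderiv_mp j 1 = 0"
  using pderiv_mp_const[of j 1] by (simp add: const_def)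

lemma pderiv_mp_var: "pderiv_mp j (var i) = (if i = j then 1 else 0)"
  by (simp add: pderiv_mp_eq_frag_extend var_def pderiv_monom_def lookup_single when_def)

lemma pderiv_mp_linform: "pderiv_mp j (linform a) = const (a j)"
proof -
  have "pderiv_mp j (linform a) = (\<Sum>i\<in>UNIV. if i = j then const (a i) else 0)"
    unfolding linform_def pderiv_mp_sum
    by (intro sum.cong) (simp_all add: pderiv_mp_mult pderiv_mp_var)
  then show ?thesis by simp
qed

lemma pderiv_mp_prod:
  assumes "finite I"
  shows "pderiv_mp j (\<Prod>i\<in>I. F i) = (\<Sum>i\<in>I. pderiv_mp j (F i) * (\<Prod>k\<in>I - {i}. F k))"
  using assms
proof (induction I rule: finite_induct)
  case (insert x I)
  have "(\<Prod>k\<in>insert x I - {i}. F k) = F x * (\<Prod>k\<in>I - {i}. F k)" if "i \<in> I" for i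
  proof -
    have "insert x I - {i} = insert x (I - {i})"
      using insert.hyps that by auto
    then show ?thesis
      using insert.hyps by simp
  qed
  then have "F x * pderiv_mp j (\<Prod>i\<in>I. F i) =
      (\<Sum>i\<in>I. pderiv_mp j (F i) * (\<Prod>k\<in>insert x I - {i}. F k))"
    by (simp add: insert.IH sum_distrib_left mult.left_commute)
  moreover have "\<Prod>(F ` (insert x I - {x})) = \<Prod>(F ` I)"
    using insert by simp
  ultimately show ?case
    using insert by (simp add: pderiv_mp_mult add.commute)
qed simp

lemma lookup_single_eq_pderiv:
  "Poly_Mapping.lookup X (Poly_Mapping.single j 1) = Poly_Mapping.lookup (pderiv_mp j X) 0"
  using subset_UNIV
proof (induction X rule: frag_induction)
  case (one m)
  have "m = Poly_Mapping.single j 1" if "Poly_Mapping.lookup m j \<noteq> 0" "m - Poly_Mapping.single j 1 = 0"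
    using monomial_diff_add[OF that(1), of "Poly_Mapping.single j 1"] that(2) by simp
  then show ?case
    by (auto simp: pderiv_mp_eq_frag_extend pderiv_monom_def lookup_single when_def)
next
  case (diff X Y)
  then show ?case
    by (simp add: pderiv_mp_eq_frag_extend frag_extend_diff lookup_minus)
qed simp

section \<open>Substitution\<close>

definition subst_mp :: "('v::finite \<Rightarrow> 'v mpoly_int) \<Rightarrow> 'v mpoly_int \<Rightarrow> 'v mpoly_int" where
  "subst_mp s = frag_extend (\<lambda>m. \<Prod>v\<in>UNIV. s v ^ Poly_Mapping.lookup m v)"

lemma subst_mp_monom: "subst_mp s (frag_of m) = (\<Prod>v\<in>UNIV. s v ^ Poly_Mapping.lookup m v)"
  by (simp add: subst_mp_def)

lemma subst_mp_0 [simp]: "subst_mp s 0 = 0"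
  by (simp add: subst_mp_def)

lemma subst_mp_add: "subst_mp s (X + Y) = subst_mp s X + subst_mp s Y"
  by (simp add: subst_mp_def frag_extend_add)

lemma subst_mp_diff: "subst_mp s (X - Y) = subst_mp s X - subst_mp s Y"
  by (simp add: subst_mp_def frag_extend_diff)

lemma subst_mp_mult: "subst_mp s (X * Y) = subst_mp s X * subst_mp s Y"
  unfolding subst_mp_def
  by (rule frag_extend_mult) (simp add: lookup_add power_add prod.distrib)

lemma subst_mp_1 [simp]: "subst_mp s 1 = 1"
  using subst_mp_monom[of s 0] by simp

lemma subst_mp_const [simp]: "subst_mp s (const c :: 'v::finite mpoly_int) = const c"
proof -
  have "const c = frag_cmul c (1 :: 'v mpoly_int)"
    by (simp add: frag_cmul_eq_const_mult)
  moreover have "subst_mp s (frag_cmul c 1) = frag_cmul c (subst_mp s 1)"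
    by (simp only: subst_mp_def frag_extend_cmul)
  ultimately show ?thesis
    by simp
qed

lemma subst_mp_of_int [simp]: "subst_mp s (of_int c) = of_int c"
  using subst_mp_const[of s c] by (simp add: const_eq_of_int)

lemma subst_mp_var [simp]: "subst_mp s (var v) = s v"
proof -
  have "(\<Prod>w\<in>UNIV. s w ^ Poly_Mapping.lookup (Poly_Mapping.single v 1) w) = (\<Prod>w\<in>UNIV. if w = v then s w else 1)"
    by (rule prod.cong) (auto simp: lookup_single)
  then show ?thesis
    by (simp add: var_def subst_mp_monom)
qed

lemma subst_mp_sum: "subst_mp s (\<Sum>i\<in>I. F i) = (\<Sum>i\<in>I. subst_mp s (F i))"
  by (induction I rule: infinite_finite_induct) (simp_all add: subst_mp_add)

lemma subst_mp_prod: "subst_mp s (\<Prod>i\<in>I. F i) = (\<Prod>i\<in>I. subst_mp s (F i))"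
  by (induction I rule: infinite_finite_induct) (simp_all add: subst_mp_mult)

lemma subst_mp_power: "subst_mp s (X ^ k) = subst_mp s X ^ k"
  by (induction k) (simp_all add: subst_mp_mult)

lemma subst_mp_linform: "subst_mp s (linform a) = (\<Sum>j\<in>UNIV. const (a j) * s j)"
  by (simp add: linform_def subst_mp_sum subst_mp_mult)

lemma prod_var_power: "(\<Prod>v\<in>UNIV. var v ^ Poly_Mapping.lookup m v) = frag_of (m :: 'v::finite \<Rightarrow>\<^sub>0 nat)"
proof -
  have "var v ^ k = frag_of (Poly_Mapping.single v k)" for v :: 'v and k
    by (induction k) (simp_all add: var_def mult_single add.commute flip: single_add)
  then have "(\<Prod>v\<in>UNIV. var v ^ Poly_Mapping.lookup m v) =
      (\<Prod>v\<in>UNIV. frag_of (Poly_Mapping.single v (Poly_Mapping.lookup m v)))"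
    by simp
  also have "\<dots> = frag_of (\<Sum>v\<in>UNIV. Poly_Mapping.single v (Poly_Mapping.lookup m v))"
    by (induction rule: infinite_finite_induct) (simp_all add: mult_single)
  also have "(\<Sum>v\<in>UNIV. Poly_Mapping.single v (Poly_Mapping.lookup m v)) = m"
    by (rule poly_mapping_eqI) (simp add: lookup_sum lookup_single when_def)
  finally show ?thesis .
qed

lemma subst_mp_var_id [simp]: "subst_mp var X = X"
  using subset_UNIV
  by (induction X rule: frag_induction) (simp_all add: subst_mp_monom prod_var_power subst_mp_diff)

lemma subst_mp_subst_mp: "subst_mp s (subst_mp t X) = subst_mp (\<lambda>v. subst_mp s (t v)) X"
  using subset_UNIV
  by (induction X rule: frag_induction)
    (simp_all add: subst_mp_monom subst_mp_prod subst_mp_power subst_mp_diff)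

lemma subst_mp_zero: "subst_mp (\<lambda>_. 0) (X :: 'v::finite mpoly_int) = const (Poly_Mapping.lookup X 0)"
  using subset_UNIV
proof (induction X rule: frag_induction)
  case (one m)
  have "(\<Prod>v\<in>UNIV. (0 :: 'v mpoly_int) ^ Poly_Mapping.lookup m v) = (if m = 0 then 1 else 0)"
  proof (cases "m = 0")
    case False
    then obtain v where "Poly_Mapping.lookup m v \<noteq> 0"
      by (metis lookup_zero poly_mapping_eqI)
    then have "(0 :: 'v mpoly_int) ^ Poly_Mapping.lookup m v = 0"
      by (simp add: power_0_left)
    then have "(\<Prod>v\<in>UNIV. (0 :: 'v mpoly_int) ^ Poly_Mapping.lookup m v) = 0"
      by (intro prod_zero) auto
    with False show ?thesis
      by simp
  qed simp
  then show ?case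
    by (simp add: subst_mp_monom const_def)
next
  case (diff X Y)
  then show ?case
    by (simp add: subst_mp_diff lookup_minus const_eq_of_int)
qed (simp add: subst_mp_def const_def)

lemma dvd_prod_diff:
  fixes f g :: "'b \<Rightarrow> 'a::comm_ring_1"
  assumes "\<And>i. i \<in> I \<Longrightarrow> c dvd f i - g i"
  shows "c dvd prod f I - prod g I"
  using assms
proof (induction I rule: infinite_finite_induct)
  case (insert x I)
  have "prod f (insert x I) - prod g (insert x I) =
      f x * (prod f I - prod g I) + prod g I * (f x - g x)"
    using insert.hyps by (simp add: algebra_simps)
  then show ?case
    using insert by simp
qed simp_all

lemma dvd_subst_mp_diff:
  assumes "\<And>v. c dvd s v - var v"
  shows "c dvd subst_mp s X - X"
  using subset_UNIV
proof (induction X rule: frag_induction)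
  case (one m)
  have "c dvd s v ^ k - var v ^ k" for v k
    using assms[of v] power_diff_sumr2[of "s v" k "var v"] by simp
  then have "c dvd (\<Prod>v\<in>UNIV. s v ^ Poly_Mapping.lookup m v) - (\<Prod>v\<in>UNIV. var v ^ Poly_Mapping.lookup m v)"
    by (intro dvd_prod_diff)
  then show ?case
    by (simp add: subst_mp_monom prod_var_power)
next
  case (diff X Y)
  then have "c dvd (subst_mp s X - X) - (subst_mp s Y - Y)"
    by (rule dvd_diff)
  then show ?case
    by (simp add: subst_mp_diff algebra_simps)
qed (simp add: subst_mp_def)

section \<open>Coefficients of linear forms\<close>

definition primitive :: "('v \<Rightarrow> int) \<Rightarrow> bool" where
  "primitive b \<longleftrightarrow> (\<forall>q::int. prime q \<longrightarrow> \<not> (\<forall>j. q dvd b j))"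

definition proportional_mod :: "int \<Rightarrow> ('v \<Rightarrow> int) \<Rightarrow> ('v \<Rightarrow> int) \<Rightarrow> bool" where
  "proportional_mod q b b' \<longleftrightarrow> (\<exists>c. \<forall>j. q dvd b' j - c * b j)"

definition parallel :: "('v \<Rightarrow> int) \<Rightarrow> ('v \<Rightarrow> int) \<Rightarrow> bool" where
  "parallel b b' \<longleftrightarrow> (\<forall>j k. b j * b' k = b k * b' j)"

lemma linform_zero: "linform (\<lambda>_. 0) = 0"
  by (simp add: linform_def const_def)

lemma linform_update: "linform (b(j := x)) = linform b + const (x - b j) * var j"
proof -
  have "const ((b(j := x)) i) * var i = const (b i) * var i + (if i = j then const (x - b j) * var j else 0)" for i
    by (auto simp: const_eq_of_int algebra_simps)
  then show ?thesis
    by (simp add: linform_def sum.distrib)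
qed

lemma linform_lincomb:
  "linform (\<lambda>j. x * b j + y * c j) = const x * linform b + const y * (linform c :: 'v::finite mpoly_int)"
  by (simp add: linform_def sum_distrib_left sum.distrib const_eq_of_int algebra_simps)

lemma lookup_linform_mult_zero: "Poly_Mapping.lookup (linform a * B) 0 = 0"
proof -
  have "const (Poly_Mapping.lookup (linform a * B) 0) = subst_mp (\<lambda>_. 0) (linform a) * subst_mp (\<lambda>_. 0) B"
    by (simp add: subst_mp_mult flip: subst_mp_zero)
  then show ?thesis
    by (simp add: subst_mp_linform)
qed

lemma lookup_linform_mult_single:
  "Poly_Mapping.lookup (linform a * B) (Poly_Mapping.single j 1) = a j * Poly_Mapping.lookup B 0"
  unfolding lookup_single_eq_pderiv
  by (simp add: pderiv_mp_mult pderiv_mp_linform lookup_add lookup_const_mult lookup_linform_mult_zero)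

lemma lookup_linform_single: "Poly_Mapping.lookup (linform a) (Poly_Mapping.single j 1) = a j"
  using lookup_linform_mult_single[of a 1 j] by simp

lemma const_dvd_linform_iff: "const q dvd linform (a :: 'v::finite \<Rightarrow> int) \<longleftrightarrow> (\<forall>j. q dvd a j)"
proof
  assume "const q dvd linform a"
  then have "q dvd Poly_Mapping.lookup (linform a) (Poly_Mapping.single j 1)" for j
    by (simp add: const_dvd_iff)
  then show "\<forall>j. q dvd a j"
    unfolding lookup_linform_single by blast
next
  assume "\<forall>j. q dvd a j"
  then have "const (a j) = const q * (const (a j div q) :: 'v mpoly_int)" for j
    by (simp add: const_eq_of_int flip: of_int_mult)
  then have "linform a = const q * linform (\<lambda>j. a j div q)"
    by (simp add: linform_def sum_distrib_left mult.assoc)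
  then show "const q dvd linform a"
    by (metis dvd_triv_left)
qed

lemma primitive_iff_not_const_dvd:
  "primitive (b :: 'v::finite \<Rightarrow> int) \<longleftrightarrow> (\<forall>q. prime q \<longrightarrow> \<not> const q dvd linform b)"
  by (simp add: primitive_def const_dvd_linform_iff)

lemma const_mem_ideal2_linform_iff: "const c \<in> ideal2 (const q) (linform a) \<longleftrightarrow> q dvd c"
proof
  assume "const c \<in> ideal2 (const q) (linform a)"
  then obtain A B where "const c = const q * A + linform a * B"
    by (auto simp: ideal2_def)
  then have "Poly_Mapping.lookup (const c :: 'a mpoly_int) 0 = q * Poly_Mapping.lookup A 0"
    by (simp add: lookup_add lookup_const_mult lookup_linform_mult_zero)
  then show "q dvd c"
    by (simp add: const_def)
next
  assume "q dvd c"
  then have "const c = const q * (const (c div q) :: 'a mpoly_int)"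
    by (simp add: const_eq_of_int flip: of_int_mult)
  then show "const c \<in> ideal2 (const q) (linform a)"
    by (metis ideal2_left)
qed

lemma linform_mem_ideal2_imp_proportional_mod:
  assumes "linform b \<in> ideal2 (const q) (linform a)"
  shows "proportional_mod q a b"
proof -
  obtain A B where AB: "linform b = const q * A + linform a * B"
    using assms by (auto simp: ideal2_def)
  have "b j = q * Poly_Mapping.lookup A (Poly_Mapping.single j 1) + Poly_Mapping.lookup B 0 * a j" for j
    using arg_cong[OF AB, of "\<lambda>X. Poly_Mapping.lookup X (Poly_Mapping.single j 1)"]
    unfolding lookup_linform_single lookup_add lookup_const_mult lookup_linform_mult_single
    by (simp add: mult.commute)
  then show ?thesis
    unfolding proportional_mod_def by (intro exI[of _ "Poly_Mapping.lookup B 0"]) simp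
qed

lemma proportional_mod_0_imp_parallel: "proportional_mod 0 b b' \<Longrightarrow> parallel b b'"
  by (auto simp: proportional_mod_def parallel_def)

lemma hyperplane_eq_if_parallel:
  assumes "parallel b b'" "b j0 \<noteq> 0" "b' k0 \<noteq> 0"
  shows "hyperplane b = hyperplane b'"
proof -
  have "b j0 * b' k0 = b k0 * b' j0"
    using assms(1) by (simp add: parallel_def)
  with assms(2,3) have "b' j0 \<noteq> 0"
    by auto
  have key: "of_int (b j0) * (\<Sum>j\<in>UNIV. of_int (b' j) * x j) =
      of_int (b' j0) * (\<Sum>j\<in>UNIV. of_int (b j) * (x j :: rat))" for x
    unfolding sum_distrib_left
  proof (rule sum.cong)
    fix k
    have "b j0 * b' k = b' j0 * b k"
      using assms(1) by (simp add: parallel_def mult.commute)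
    then have "of_int (b j0 * b' k) = (of_int (b' j0 * b k) :: rat)"
      by simp
    then show "of_int (b j0) * (of_int (b' k) * x k) = of_int (b' j0) * (of_int (b k) * x k)"
      by (simp add: mult.assoc[symmetric])
  qed simp
  show ?thesis
    unfolding hyperplane_def
  proof (intro Collect_cong)
    fix x :: "'a \<Rightarrow> rat"
    show "(\<Sum>j\<in>UNIV. of_int (b j) * x j) = 0 \<longleftrightarrow> (\<Sum>j\<in>UNIV. of_int (b' j) * x j) = 0"
      using key[of x] assms(2) \<open>b' j0 \<noteq> 0\<close> by auto
  qed
qed

lemma not_parallel_if_hyperplane_neq:
  assumes "linform b \<noteq> 0" "linform b' \<noteq> 0" "hyperplane b \<noteq> hyperplane b'"
  shows "\<not> parallel b b'"
proof
  assume "parallel b b'"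
  moreover obtain j0 k0 where "b j0 \<noteq> 0" "b' k0 \<noteq> 0"
    using assms(1,2) linform_zero by (metis ext)
  ultimately show False
    using assms(3) hyperplane_eq_if_parallel by blast
qed

section \<open>The ideal generated by a prime and a primitive linear form is prime\<close>

text \<open>Since \<open>a j0\<close> is a unit, the substitution \<open>s\<close> kills \<open>linform a\<close> while changing every
  polynomial only by a multiple of \<open>linform a\<close>.\<close>

lemma mem_ideal2_linform_unit_coeff:
  fixes a :: "'v::finite \<Rightarrow> int"
  assumes "\<bar>a j0\<bar> = 1"
  defines "s \<equiv> var(j0 := var j0 - const (a j0) * linform a)"
  shows "X \<in> ideal2 (const q) (linform a) \<longleftrightarrow> const q dvd subst_mp s X"
proof -
  have "a j0 = 1 \<or> a j0 = - 1"
    using assms(1) by arith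
  then have unit: "const (a j0) * const (a j0) = (1 :: 'v mpoly_int)"
    by (auto simp: const_eq_of_int)
  have "subst_mp s (linform a) =
      (\<Sum>j\<in>UNIV. const (a j) * var j - (if j = j0 then const (a j0) * const (a j0) * linform a else 0))"
    unfolding subst_mp_linform s_def by (intro sum.cong) (auto simp: algebra_simps)
  also have "\<dots> = 0"
    by (simp add: sum_subtractf unit linform_def)
  finally have kill: "subst_mp s (linform a) = 0" .
  have "linform a dvd subst_mp s X - X"
    by (rule dvd_subst_mp_diff) (simp add: s_def)
  then obtain D where "subst_mp s X - X = linform a * D"
    by (elim dvdE)
  then have D: "X = subst_mp s X + linform a * (- D)"
    by (simp add: algebra_simps)
  show ?thesis
  proof
    assume "X \<in> ideal2 (const q) (linform a)"
    then obtain A B where "X = const q * A + linform a * B"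
      by (auto simp: ideal2_def)
    then have "subst_mp s X = const q * subst_mp s A"
      by (simp add: subst_mp_add subst_mp_mult kill)
    then show "const q dvd subst_mp s X"
      by simp
  next
    assume "const q dvd subst_mp s X"
    then show "X \<in> ideal2 (const q) (linform a)"
      by (subst D) (auto intro!: ideal2_add ideal2_diff ideal2_left ideal2_right elim!: dvdE)
  qed
qed

lemma prime_ideal_linform_unit_coeff:
  fixes a :: "'v::finite \<Rightarrow> int"
  assumes "\<bar>a j0\<bar> = 1" "q = 0 \<or> prime q"
  shows "prime_ideal (ideal2 (const q) (linform a))"
proof -
  define s where "s = var(j0 := var j0 - const (a j0) * linform a)"
  have mem: "X \<in> ideal2 (const q) (linform a) \<longleftrightarrow> const q dvd subst_mp s X" for X
    unfolding s_def using assms(1) by (rule mem_ideal2_linform_unit_coeff)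
  show ?thesis
    unfolding prime_ideal_def mem
    using const_dvd_multD[OF assms(2)] assms(2) by (auto simp: subst_mp_mult const_dvd_1_iff)
qed

definition shear :: "'v::finite \<Rightarrow> 'v \<Rightarrow> int \<Rightarrow> 'v mpoly_int \<Rightarrow> 'v mpoly_int" where
  "shear k j c = subst_mp (var(k := var k + const c * var j))"

lemma shear_linform:
  assumes "j \<noteq> k"
  shows "shear k j c (linform b) = linform (b(j := b j + c * b k))"
proof -
  have "shear k j c (linform b) =
      (\<Sum>i\<in>UNIV. const (b i) * var i + (if i = k then const (c * b k) * var j else 0))"
    unfolding shear_def subst_mp_linform by (intro sum.cong) (auto simp: const_eq_of_int algebra_simps)
  also have "\<dots> = linform b + const (c * b k) * var j"
    by (simp add: sum.distrib linform_def)
  finally show ?thesis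
    by (simp add: linform_update)
qed

lemma shear_inverse:
  assumes "j \<noteq> k"
  shows "shear k j (- c) (shear k j c X) = X"
proof -
  have "subst_mp (var(k := var k + const (- c) * var j)) ((var(k := var k + const c * var j)) v) = var v" for v
    using assms by (simp add: subst_mp_add subst_mp_mult const_eq_of_int)
  then show ?thesis
    by (simp add: shear_def subst_mp_subst_mp)
qed

lemma shear_mem_ideal2:
  assumes "X \<in> ideal2 (const q) B"
  shows "shear k j c X \<in> ideal2 (const q) (shear k j c B)"
proof -
  obtain S T where "X = const q * S + B * T"
    using assms by (auto simp: ideal2_def)
  then have "shear k j c X = const q * shear k j c S + shear k j c B * shear k j c T"
    by (simp add: shear_def subst_mp_add subst_mp_mult)
  then show ?thesis
    by (auto simp: ideal2_def)
qed

lemma prime_ideal_shear: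
  assumes "j \<noteq> k" and prime: "prime_ideal (ideal2 (const q) (linform b))"
  shows "prime_ideal (ideal2 (const q) (linform (b(j := b j + c * b k))))"
proof -
  let ?b' = "b(j := b j + c * b k)"
  have shear_back: "shear k j (- c) (linform ?b') = linform b"
    using assms(1) by (simp add: shear_linform)
  have map_down: "shear k j (- c) X \<in> ideal2 (const q) (linform b)"
    if "X \<in> ideal2 (const q) (linform ?b')" for X
    using shear_mem_ideal2[OF that, of k j "- c"] shear_back by simp
  have map_up: "X \<in> ideal2 (const q) (linform ?b')"
    if "shear k j (- c) X \<in> ideal2 (const q) (linform b)" for X
    using shear_mem_ideal2[OF that, of k j c] shear_inverse[OF assms(1), of "- c"] assms(1)
    by (simp add: shear_linform)
  have mult: "shear k j (- c) (X * Y) = shear k j (- c) X * shear k j (- c) Y" for X Y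
    by (simp add: shear_def subst_mp_mult)
  show ?thesis
    unfolding prime_ideal_def
  proof (intro conjI allI impI notI)
    assume "1 \<in> ideal2 (const q) (linform ?b')"
    then have "1 \<in> ideal2 (const q) (linform b)"
      using map_down[of 1] by (simp add: shear_def)
    then show False
      using prime by (simp add: prime_ideal_def)
  next
    fix X Y
    assume "X * Y \<in> ideal2 (const q) (linform ?b')"
    then have "shear k j (- c) X * shear k j (- c) Y \<in> ideal2 (const q) (linform b)"
      using map_down[of "X * Y"] by (simp only: mult)
    then have "shear k j (- c) X \<in> ideal2 (const q) (linform b) \<or> shear k j (- c) Y \<in> ideal2 (const q) (linform b)"
      using prime by (simp add: prime_ideal_def)
    then show "X \<in> ideal2 (const q) (linform ?b') \<or> Y \<in> ideal2 (const q) (linform ?b')"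
      using map_up by blast
  qed
qed

lemma primitive_update:
  assumes "j \<noteq> k" "primitive b"
  shows "primitive (b(j := b j - c * b k))"
  unfolding primitive_def
proof (intro allI impI notI)
  fix q :: int
  assume "prime q" and dvd: "\<forall>i. q dvd (b(j := b j - c * b k)) i"
  then have "q dvd b k" "q dvd b j - c * b k"
    using assms(1) spec[OF dvd, of k] spec[OF dvd, of j] by simp_all
  then have "q dvd (b j - c * b k) + c * b k"
    by (intro dvd_add dvd_mult)
  then have "q dvd b i" for i
    using spec[OF dvd, of i] by (cases "i = j") simp_all
  with assms(2) \<open>prime q\<close> show False
    by (auto simp: primitive_def)
qed

lemma primitive_two_nonzero_coeffs:
  fixes b :: "'v \<Rightarrow> int"
  assumes prim: "primitive b" and no_unit: "\<forall>j. \<bar>b j\<bar> \<noteq> 1"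
  obtains j k where "j \<noteq> k" "b j \<noteq> 0" "b k \<noteq> 0" "\<bar>b k\<bar> \<le> \<bar>b j\<bar>"
proof -
  have not_all_dvd: "\<not> (\<forall>i. q dvd b i)" if "prime q" for q
    using prim that by (simp add: primitive_def)
  obtain j1 where "\<not> 2 dvd b j1"
    using not_all_dvd[of 2] by auto
  then have j1: "b j1 \<noteq> 0"
    by auto
  have "\<exists>k1. k1 \<noteq> j1 \<and> b k1 \<noteq> 0"
  proof (rule ccontr)
    assume "\<not> ?thesis"
    then have others: "b i = 0" if "i \<noteq> j1" for i
      using that by blast
    have "\<not> is_unit (b j1)"
      using no_unit by (auto simp: zdvd1_eq)
    then obtain q where "prime q" "q dvd b j1"
      using prime_divisor_exists[OF j1] by blast
    then have "q dvd b i" for i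
      using others by (cases "i = j1") auto
    then show False
      using not_all_dvd \<open>prime q\<close> by blast
  qed
  then obtain k1 where k1: "k1 \<noteq> j1" "b k1 \<noteq> 0"
    by blast
  show thesis
    using j1 k1 by (cases "\<bar>b k1\<bar> \<le> \<bar>b j1\<bar>") (auto intro: that[of j1 k1] that[of k1 j1])
qed

lemma primitive_reduce:
  fixes b :: "'v::finite \<Rightarrow> int"
  assumes "primitive b" "\<forall>j. \<bar>b j\<bar> \<noteq> 1"
  obtains j k c where "j \<noteq> k" "primitive (b(j := b j - c * b k))"
    "(\<Sum>i\<in>UNIV. nat \<bar>(b(j := b j - c * b k)) i\<bar>) < (\<Sum>i\<in>UNIV. nat \<bar>b i\<bar>)"
proof -
  obtain j k where jk: "j \<noteq> k" "b j \<noteq> 0" "b k \<noteq> 0" "\<bar>b k\<bar> \<le> \<bar>b j\<bar>"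
    using assms by (rule primitive_two_nonzero_coeffs)
  define c where "c = sgn (b j) * sgn (b k)"
  let ?b' = "b(j := b j - c * b k)"
  have "\<bar>b j - c * b k\<bar> < \<bar>b j\<bar>"
    using jk unfolding c_def by (cases "b j > 0"; cases "b k > 0") (auto simp: sgn_if)
  moreover have "(\<Sum>i\<in>UNIV - {j}. nat \<bar>?b' i\<bar>) = (\<Sum>i\<in>UNIV - {j}. nat \<bar>b i\<bar>)"
    by (intro sum.cong) auto
  ultimately have "nat \<bar>?b' j\<bar> + (\<Sum>i\<in>UNIV - {j}. nat \<bar>?b' i\<bar>) < nat \<bar>b j\<bar> + (\<Sum>i\<in>UNIV - {j}. nat \<bar>b i\<bar>)"
    by simp
  then have "(\<Sum>i\<in>UNIV. nat \<bar>?b' i\<bar>) < (\<Sum>i\<in>UNIV. nat \<bar>b i\<bar>)"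
    by (simp only: sum.remove[of UNIV j] finite UNIV_I)
  with jk(1) primitive_update[OF jk(1) assms(1)] show thesis
    by (rule that)
qed

theorem prime_ideal_linform:
  fixes b :: "'v::finite \<Rightarrow> int"
  assumes "primitive b" "q = 0 \<or> prime q"
  shows "prime_ideal (ideal2 (const q) (linform b))"
  using assms(1)
proof (induction b rule: measure_induct_rule[where f = "\<lambda>b. \<Sum>i\<in>UNIV. nat \<bar>b i\<bar>"])
  case (less b)
  show ?case
  proof (cases "\<exists>j. \<bar>b j\<bar> = 1")
    case True
    then obtain j0 where "\<bar>b j0\<bar> = 1"
      by blast
    then show ?thesis
      using assms(2) by (rule prime_ideal_linform_unit_coeff)
  next
    case False
    then have "\<forall>j. \<bar>b j\<bar> \<noteq> 1"
      by blast
    with less.prems obtain j k c where jk: "j \<noteq> k" "primitive (b(j := b j - c * b k))"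
      "(\<Sum>i\<in>UNIV. nat \<bar>(b(j := b j - c * b k)) i\<bar>) < (\<Sum>i\<in>UNIV. nat \<bar>b i\<bar>)"
      by (rule primitive_reduce)
    let ?b' = "b(j := b j - c * b k)"
    have "prime_ideal (ideal2 (const q) (linform ?b'))"
      by (rule less.IH[OF jk(3,2)])
    then have "prime_ideal (ideal2 (const q) (linform (?b'(j := ?b' j + c * ?b' k))))"
      by (rule prime_ideal_shear[OF jk(1)])
    moreover have "?b'(j := ?b' j + c * ?b' k) = b"
      using jk(1) by auto
    ultimately show ?thesis
      by simp
  qed
qed

lemma prod_linform_notin_ideal2:
  assumes "primitive a" "q = 0 \<or> prime q" "\<And>k. k \<in> K \<Longrightarrow> \<not> proportional_mod q a (b k)"
  shows "(\<Prod>k\<in>K. linform (b k)) \<notin> ideal2 (const q) (linform a)"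
  using prime_ideal_linform[OF assms(1,2)] assms(3) linform_mem_ideal2_imp_proportional_mod
  by (intro prime_ideal_prod) blast+

lemma const_mult_notin_ideal2_linform:
  assumes "primitive a" "prime p" "\<not> p dvd t" "R \<notin> ideal2 (const p) (linform a)"
  shows "const t * R \<notin> ideal2 (const p) (linform a)"
proof
  assume "const t * R \<in> ideal2 (const p) (linform a)"
  then have "const t \<in> ideal2 (const p) (linform a) \<or> R \<in> ideal2 (const p) (linform a)"
    using prime_idealD[OF prime_ideal_linform[OF assms(1)]] assms(2) by blast
  then show False
    using assms(3,4) by (simp add: const_mem_ideal2_linform_iff)
qed

section \<open>The Jacobian ideal and the cokernel\<close>

definition defpoly_omit :: "nat \<Rightarrow> (nat \<Rightarrow> 'v::finite \<Rightarrow> int) \<Rightarrow> nat \<Rightarrow> 'v mpoly_int" where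
  "defpoly_omit n a i = (\<Prod>k\<in>{..<n} - {i}. linform (a k))"

definition cofactor_sum :: "nat \<Rightarrow> (nat \<Rightarrow> 'v::finite \<Rightarrow> int) \<Rightarrow> (nat \<Rightarrow> 'v mpoly_int) \<Rightarrow> 'v mpoly_int" where
  "cofactor_sum n a w = (\<Sum>i<n. w i * defpoly_omit n a i)"

definition cofactor_ideal :: "nat \<Rightarrow> (nat \<Rightarrow> 'v::finite \<Rightarrow> int) \<Rightarrow> 'v mpoly_int set" where
  "cofactor_ideal n a = {c * defpoly n a + cofactor_sum n a w | c w. True}"

lemma defpoly_split: "i < n \<Longrightarrow> defpoly n a = linform (a i) * defpoly_omit n a i"
  unfolding defpoly_def defpoly_omit_def by (simp add: prod.remove)

lemma linform_dvd_defpoly_omit: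
  assumes "i < n" "k \<noteq> i"
  shows "linform (a i) dvd defpoly_omit n a k"
proof -
  have "defpoly_omit n a k = linform (a i) * (\<Prod>m\<in>{..<n} - {k} - {i}. linform (a m))"
    unfolding defpoly_omit_def using assms by (intro prod.remove) auto
  then show ?thesis by simp
qed

lemma cofactor_sum_diff: "cofactor_sum n a (\<lambda>i. u i - v i) = cofactor_sum n a u - cofactor_sum n a v"
  by (simp add: cofactor_sum_def left_diff_distrib sum_subtractf)

lemma cofactor_sum_const_mult: "cofactor_sum n a (\<lambda>i. X * w i) = X * cofactor_sum n a w"
  by (simp add: cofactor_sum_def sum_distrib_left mult.assoc)

lemma cofactor_sum_linform_mult:
  "cofactor_sum n a (\<lambda>i. h i * linform (a i)) = (\<Sum>i<n. h i) * defpoly n a"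
  unfolding cofactor_sum_def sum_distrib_right
  by (intro sum.cong) (simp_all add: defpoly_split mult.assoc)

lemma pderiv_mp_defpoly:
  "pderiv_mp j (defpoly n a) = (\<Sum>i<n. const (a i j) * defpoly_omit n a i)"
  unfolding defpoly_def defpoly_omit_def by (simp add: pderiv_mp_prod pderiv_mp_linform)

lemma jac_ideal_eq:
  "jac_ideal n a = {c * defpoly n a + cofactor_sum n a (\<lambda>i. subst_mp d (linform (a i))) | c d. True}"
proof -
  have "(\<Sum>j\<in>UNIV. d j * pderiv_mp j (defpoly n a)) = cofactor_sum n a (\<lambda>i. subst_mp d (linform (a i)))" for d
  proof -
    have "(\<Sum>j\<in>UNIV. d j * pderiv_mp j (defpoly n a)) =
        (\<Sum>j\<in>UNIV. \<Sum>i<n. const (a i j) * d j * defpoly_omit n a i)"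
      by (simp add: pderiv_mp_defpoly sum_distrib_left algebra_simps)
    also have "\<dots> = (\<Sum>i<n. \<Sum>j\<in>UNIV. const (a i j) * d j * defpoly_omit n a i)"
      by (rule sum.swap)
    finally show ?thesis
      by (simp add: cofactor_sum_def subst_mp_linform sum_distrib_right)
  qed
  then show ?thesis
    by (simp add: jac_ideal_def)
qed

lemma coker_rel_eq:
  "coker_rel n a = {u. \<exists>h g. \<forall>i<n. u i = h i * linform (a i) + subst_mp g (linform (a i))}"
  by (simp add: coker_rel_def pderiv_mp_linform subst_mp_linform)

lemma cofactor_sum_mem_ideal2:
  assumes "i < n" "cofactor_sum n a w \<in> ideal2 x (defpoly n a)"
  shows "w i * defpoly_omit n a i \<in> ideal2 x (linform (a i))"
proof -
  have "linform (a i) dvd defpoly n a"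
    using assms(1) by (simp add: defpoly_split)
  then have "cofactor_sum n a w \<in> ideal2 x (linform (a i))"
    using assms(2) by (rule ideal2_dvd_right)
  moreover have "(\<Sum>k\<in>{..<n} - {i}. w k * defpoly_omit n a k) \<in> ideal2 x (linform (a i))"
    using assms(1) by (intro ideal2_sum ideal2_dvd dvd_mult linform_dvd_defpoly_omit) auto
  moreover have "w i * defpoly_omit n a i =
      cofactor_sum n a w - (\<Sum>k\<in>{..<n} - {i}. w k * defpoly_omit n a k)"
    unfolding cofactor_sum_def using assms(1) by (simp add: sum.remove)
  ultimately show ?thesis
    by (simp add: ideal2_diff)
qed

lemma cofactor_sum_mem_ideal2_linform:
  assumes "primitive (a i)" "i < n" "q = 0 \<or> prime q"
    and not_proportional: "\<And>k. k < n \<Longrightarrow> i \<noteq> k \<Longrightarrow> \<not> proportional_mod q (a i) (a k)"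
    and "cofactor_sum n a w \<in> ideal2 (const q) (defpoly n a)"
  shows "w i \<in> ideal2 (const q) (linform (a i))"
proof -
  have "defpoly_omit n a i \<notin> ideal2 (const q) (linform (a i))"
    unfolding defpoly_omit_def using assms(1,3) not_proportional
    by (intro prod_linform_notin_ideal2) auto
  then show ?thesis
    using prime_idealD[OF prime_ideal_linform[OF assms(1,3)] cofactor_sum_mem_ideal2[OF assms(2,5)]]
    by blast
qed

lemma not_const_dvd_defpoly:
  assumes "prime p" "\<And>i. i < n \<Longrightarrow> primitive (a i)"
  shows "\<not> const p dvd defpoly n a"
proof -
  have "linform (a k) \<notin> ideal2 (const p) 0" if "k \<in> {..<n}" for k
    using assms that by (simp add: ideal2_0_right primitive_iff_not_const_dvd)
  then have "defpoly n a \<notin> ideal2 (const p) 0"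
    unfolding defpoly_def using prime_ideal_const assms(1) by (intro prime_ideal_prod) auto
  then show ?thesis
    by (simp add: ideal2_0_right)
qed

lemma mem_jac_ideal_of_mem_coker_rel:
  assumes "w \<in> coker_rel n a"
  shows "c * defpoly n a + cofactor_sum n a w \<in> jac_ideal n a"
proof -
  obtain h g where w: "\<forall>i<n. w i = h i * linform (a i) + subst_mp g (linform (a i))"
    using assms by (auto simp: coker_rel_eq)
  then have "cofactor_sum n a w =
      cofactor_sum n a (\<lambda>i. h i * linform (a i)) + cofactor_sum n a (\<lambda>i. subst_mp g (linform (a i)))"
    by (simp add: cofactor_sum_def distrib_right sum.distrib)
  then have "c * defpoly n a + cofactor_sum n a w =
      (c + (\<Sum>i<n. h i)) * defpoly n a + cofactor_sum n a (\<lambda>i. subst_mp g (linform (a i)))"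
    by (simp add: cofactor_sum_linform_mult algebra_simps)
  then show ?thesis
    by (auto simp: jac_ideal_eq)
qed

lemma mem_jac_ideal_iff:
  assumes prim: "\<And>i. i < n \<Longrightarrow> primitive (a i)"
    and not_parallel: "\<And>i k. i < n \<Longrightarrow> k < n \<Longrightarrow> i \<noteq> k \<Longrightarrow> \<not> parallel (a i) (a k)"
  shows "c * defpoly n a + cofactor_sum n a w \<in> jac_ideal n a \<longleftrightarrow> w \<in> coker_rel n a"
proof
  assume "c * defpoly n a + cofactor_sum n a w \<in> jac_ideal n a"
  then obtain c' d where "c * defpoly n a + cofactor_sum n a w =
      c' * defpoly n a + cofactor_sum n a (\<lambda>i. subst_mp d (linform (a i)))"
    by (auto simp: jac_ideal_eq)
  then have eq: "cofactor_sum n a (\<lambda>i. w i - subst_mp d (linform (a i))) = (c' - c) * defpoly n a"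
    by (simp add: cofactor_sum_diff algebra_simps)
  have "\<exists>h. w i = h * linform (a i) + subst_mp d (linform (a i))" if "i < n" for i
  proof -
    have "\<not> proportional_mod 0 (a i) (a k)" if "k < n" "i \<noteq> k" for k
      using not_parallel[OF \<open>i < n\<close> that] proportional_mod_0_imp_parallel by blast
    moreover have "cofactor_sum n a (\<lambda>i. w i - subst_mp d (linform (a i))) \<in> ideal2 (const 0) (defpoly n a)"
      using eq by (simp add: ideal2_0_left)
    ultimately have "w i - subst_mp d (linform (a i)) \<in> ideal2 (const 0) (linform (a i))"
      using cofactor_sum_mem_ideal2_linform[where a=a and q=0, OF prim[OF that] that] by simp
    then have "linform (a i) dvd w i - subst_mp d (linform (a i))"
      by (simp add: ideal2_0_left)
    then obtain h where "w i - subst_mp d (linform (a i)) = linform (a i) * h"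
      by (elim dvdE)
    then have "w i = h * linform (a i) + subst_mp d (linform (a i))"
      by (simp add: algebra_simps)
    then show ?thesis ..
  qed
  then have "\<exists>h. \<forall>i. i < n \<longrightarrow> w i = h i * linform (a i) + subst_mp d (linform (a i))"
    by (intro choice) blast
  then show "w \<in> coker_rel n a"
    unfolding coker_rel_eq by blast
qed (rule mem_jac_ideal_of_mem_coker_rel)

lemma cofactor_sum_of_mem_ideal2:
  assumes "\<And>i. i < n \<Longrightarrow> w i \<in> ideal2 x (linform (a i))"
  obtains A B where "cofactor_sum n a w = x * cofactor_sum n a A + B * defpoly n a"
proof -
  have "\<forall>i. \<exists>AB. i < n \<longrightarrow> w i = x * fst AB + linform (a i) * snd AB"
    using assms by (auto simp: ideal2_def)
  then obtain AB where AB: "\<forall>i. i < n \<longrightarrow> w i = x * fst (AB i) + linform (a i) * snd (AB i)"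
    by (metis choice)
  have "cofactor_sum n a w =
      cofactor_sum n a (\<lambda>i. x * fst (AB i)) + cofactor_sum n a (\<lambda>i. snd (AB i) * linform (a i))"
    unfolding cofactor_sum_def sum.distrib[symmetric] using AB by (intro sum.cong) (simp_all add: algebra_simps)
  also have "\<dots> = x * cofactor_sum n a (fst \<circ> AB) + (\<Sum>i<n. snd (AB i)) * defpoly n a"
    by (simp only: cofactor_sum_const_mult cofactor_sum_linform_mult comp_def)
  finally show thesis
    by (rule that)
qed

lemma cofactor_ideal_saturated:
  assumes p: "prime p"
    and prim: "\<And>i. i < n \<Longrightarrow> primitive (a i)"
    and not_proportional: "\<And>i k. i < n \<Longrightarrow> k < n \<Longrightarrow> i \<noteq> k \<Longrightarrow> \<not> proportional_mod p (a i) (a k)"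
    and "const p * f \<in> cofactor_ideal n a"
  shows "f \<in> cofactor_ideal n a"
proof -
  obtain c w where pf: "const p * f = c * defpoly n a + cofactor_sum n a w"
    using assms(4) by (auto simp: cofactor_ideal_def)
  have "cofactor_sum n a w = const p * f - defpoly n a * c"
    using pf by (simp add: algebra_simps)
  then have "cofactor_sum n a w \<in> ideal2 (const p) (defpoly n a)"
    by (simp add: ideal2_diff ideal2_left ideal2_right)
  then have "w i \<in> ideal2 (const p) (linform (a i))" if "i < n" for i
    using cofactor_sum_mem_ideal2_linform[where a=a, OF prim[OF that] that] p not_proportional[OF that]
    by blast
  then obtain A B where "cofactor_sum n a w = const p * cofactor_sum n a A + B * defpoly n a"
    by (rule cofactor_sum_of_mem_ideal2)
  with pf have eq: "const p * (f - cofactor_sum n a A) = (c + B) * defpoly n a"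
    by (simp add: algebra_simps)
  have "const p dvd (c + B) * defpoly n a"
    unfolding eq[symmetric] by (rule dvd_triv_left)
  then have "const p dvd c + B"
    using const_dvd_multD[of p] not_const_dvd_defpoly[where n=n and a=a, OF p prim] p by blast
  then obtain t where "c + B = const p * t"
    by (elim dvdE)
  with eq have "const p * (f - cofactor_sum n a A) = const p * (t * defpoly n a)"
    by (simp add: mult.assoc)
  then have "const p * (f - cofactor_sum n a A - t * defpoly n a) = 0"
    by (simp add: right_diff_distrib)
  then have "f - cofactor_sum n a A - t * defpoly n a = 0"
    using p by (simp add: mpoly_mult_eq_0_iff)
  then have "f = t * defpoly n a + cofactor_sum n a A"
    by (simp add: algebra_simps)
  then show ?thesis
    by (auto simp: cofactor_ideal_def)
qed

lemma zero_divisor_coker_imp_quot: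
  assumes "\<And>i. i < n \<Longrightarrow> primitive (a i)"
    and "\<And>i k. i < n \<Longrightarrow> k < n \<Longrightarrow> i \<noteq> k \<Longrightarrow> \<not> parallel (a i) (a k)"
    and "zero_divisor_coker p n a"
  shows "zero_divisor_quot p (jac_ideal n a)"
proof -
  obtain v where "v \<notin> coker_rel n a" "(\<lambda>i. const p * v i) \<in> coker_rel n a"
    using assms(3) by (auto simp: zero_divisor_coker_def)
  then have "cofactor_sum n a v \<notin> jac_ideal n a" "const p * cofactor_sum n a v \<in> jac_ideal n a"
    using mem_jac_ideal_iff[where c=0 and w=v, OF assms(1,2)]
      mem_jac_ideal_iff[where c=0 and w="\<lambda>i. const p * v i", OF assms(1,2)]
    by (simp_all add: cofactor_sum_const_mult)
  then show ?thesis
    by (auto simp: zero_divisor_quot_def)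
qed

section \<open>Torsion in the cokernel from a pair of forms proportional modulo p\<close>

lemma finite_proportional_mod_powers:
  fixes b b' :: "'v \<Rightarrow> int"
  assumes p: "prime p" and "\<not> parallel b b'"
  shows "finite {e. proportional_mod (p ^ e) b b'}"
proof -
  obtain jm km where minor: "b jm * b' km - b km * b' jm \<noteq> 0"
    using assms(2) by (auto simp: parallel_def)
  have "e < nat \<bar>b jm * b' km - b km * b' jm\<bar>" if e_prop: "proportional_mod (p ^ e) b b'" for e
  proof -
    obtain \<beta> where \<beta>: "\<And>j. p ^ e dvd b' j - \<beta> * b j"
      using e_prop by (auto simp: proportional_mod_def)
    have "b jm * b' km - b km * b' jm = b jm * (b' km - \<beta> * b km) - b km * (b' jm - \<beta> * b jm)"
      by (simp add: algebra_simps)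
    then have "p ^ e dvd b jm * b' km - b km * b' jm"
      using \<beta> by simp
    then have "\<bar>p ^ e\<bar> \<le> \<bar>b jm * b' km - b km * b' jm\<bar>"
      using minor by (intro dvd_imp_le_int)
    moreover have "\<bar>p ^ e\<bar> = p ^ e"
      using prime_ge_0_int[OF p] by simp
    moreover have "int e < int (2 ^ e)"
      using less_exp[of e] by (simp only: of_nat_less_iff)
    then have "int e < 2 ^ e"
      by simp
    moreover have "(2::int) ^ e \<le> p ^ e"
      using prime_ge_2_int[OF p] by (intro power_mono) auto
    ultimately have "int e < \<bar>b jm * b' km - b km * b' jm\<bar>"
      by linarith
    then show ?thesis
      by (simp add: zless_nat_eq_int_zless)
  qed
  then have "{e. proportional_mod (p ^ e) b b'} \<subseteq> {..<nat \<bar>b jm * b' km - b km * b' jm\<bar>}"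
    by blast
  then show ?thesis
    using finite_subset by blast
qed

lemma proportional_mod_maximal_power:
  fixes b b' :: "'v \<Rightarrow> int"
  assumes p: "prime p" and "\<not> parallel b b'" and "proportional_mod p b b'"
  obtains \<beta> e u where "b' = (\<lambda>j. \<beta> * b j + p ^ Suc e * u j)" "\<not> proportional_mod p b u"
proof -
  define Es where "Es = {e. proportional_mod (p ^ e) b b'}"
  have "finite Es" "1 \<in> Es"
    using finite_proportional_mod_powers[OF assms(1,2)] assms(3) by (simp_all add: Es_def)
  then have "Max Es \<in> Es" "1 \<le> Max Es" and maximal: "\<And>e. e \<in> Es \<Longrightarrow> e \<le> Max Es"
    by (auto intro: Max_in)
  then obtain \<beta> where \<beta>: "\<And>j. p ^ Max Es dvd b' j - \<beta> * b j"
    by (auto simp: Es_def proportional_mod_def)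
  define u where "u j = (b' j - \<beta> * b j) div p ^ Max Es" for j
  have u: "b' j = \<beta> * b j + p ^ Max Es * u j" for j
    using \<beta>[of j] by (simp add: u_def)
  have "\<not> proportional_mod p b u"
  proof
    assume "proportional_mod p b u"
    then obtain \<mu> where \<mu>: "\<And>j. p dvd u j - \<mu> * b j"
      by (auto simp: proportional_mod_def)
    have "p ^ Suc (Max Es) dvd b' j - (\<beta> + \<mu> * p ^ Max Es) * b j" for j
    proof -
      have "b' j - (\<beta> + \<mu> * p ^ Max Es) * b j = p ^ Max Es * (u j - \<mu> * b j)"
        using u[of j] by (simp add: algebra_simps)
      then show ?thesis
        using \<mu>[of j] by (simp add: mult_dvd_mono)
    qed
    then have "Suc (Max Es) \<in> Es"
      by (auto simp: Es_def proportional_mod_def)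
    then show False
      using maximal by fastforce
  qed
  moreover obtain e where "Max Es = Suc e"
    using \<open>1 \<le> Max Es\<close> by (cases "Max Es") auto
  ultimately show thesis
    using u that[of \<beta> e u] by auto
qed

lemma not_proportional_mod_minor:
  fixes b u :: "'v \<Rightarrow> int"
  assumes "prime p" "\<not> p dvd b j0" "\<not> proportional_mod p b u"
  obtains k0 where "\<not> p dvd b j0 * u k0 - b k0 * u j0"
proof -
  have "coprime (b j0) p"
    using assms(1,2) by (simp add: prime_imp_coprime coprime_commute)
  then obtain x where x: "p dvd b j0 * x - 1"
    using cong_solve_coprime_int[of "b j0" p] by (auto simp: cong_iff_dvd_diff)
  have "\<exists>k0. \<not> p dvd b j0 * u k0 - b k0 * u j0"
  proof (rule ccontr)
    assume "\<not> ?thesis"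
    then have minors: "p dvd b j0 * u k - b k * u j0" for k
      by blast
    have "p dvd u k - x * u j0 * b k" for k
    proof -
      have "u k - x * u j0 * b k = x * (b j0 * u k - b k * u j0) - (b j0 * x - 1) * u k"
        by (simp add: algebra_simps)
      then show ?thesis
        using minors[of k] x by simp
    qed
    then show False
      using assms(3) by (auto simp: proportional_mod_def)
  qed
  then show thesis
    using that by blast
qed

lemma subst_mp_const_mult_linform:
  "subst_mp (\<lambda>t. const (G t) * R) (linform b) = const (\<Sum>t\<in>UNIV. b t * G t) * (R :: 'v::finite mpoly_int)"
  by (simp add: subst_mp_linform sum_distrib_left const_eq_of_int algebra_simps)

lemma torsion_candidate_mem_coker_rel:
  fixes G :: "'v::finite \<Rightarrow> int" and n :: nat and a :: "nat \<Rightarrow> 'v \<Rightarrow> int"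
  assumes "\<And>i. i \<in> P \<Longrightarrow> p dvd (\<Sum>t\<in>UNIV. a i t * G t)"
  defines "R \<equiv> \<Prod>k\<in>{..<n} - P. linform (a k)"
  shows "(\<lambda>i. const p * (if i \<in> P then const ((\<Sum>t\<in>UNIV. a i t * G t) div p) * R else 0)) \<in> coker_rel n a"
  unfolding coker_rel_eq
proof (intro CollectI exI allI impI)
  fix i
  assume "i < n"
  let ?N = "\<Sum>t\<in>UNIV. a i t * G t"
  let ?h = "\<lambda>i. if i \<in> P then 0 else - const (\<Sum>t\<in>UNIV. a i t * G t) * (\<Prod>k\<in>{..<n} - P - {i}. linform (a k))"
  show "const p * (if i \<in> P then const (?N div p) * R else 0) =
      ?h i * linform (a i) + subst_mp (\<lambda>t. const (G t) * R) (linform (a i))"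
  proof (cases "i \<in> P")
    case True
    then have "const p * const (?N div p) = (const ?N :: 'v mpoly_int)"
      using assms(1) by (simp add: const_eq_of_int flip: of_int_mult)
    with True show ?thesis
      by (simp add: subst_mp_const_mult_linform mult.assoc[symmetric])
  next
    case False
    with \<open>i < n\<close> have "R = linform (a i) * (\<Prod>k\<in>{..<n} - P - {i}. linform (a k))"
      unfolding R_def by (intro prod.remove) auto
    with False show ?thesis
      by (simp add: subst_mp_const_mult_linform algebra_simps)
  qed
qed

lemma linform_dvd_const_mult_cancel:
  assumes "primitive a" "c \<noteq> 0" "linform a dvd const c * Z"
  shows "linform a dvd Z"
proof -
  have "prime_ideal (ideal2 0 (linform a))"
    using prime_ideal_linform[OF assms(1), of 0] by simp
  moreover have "const c \<notin> ideal2 0 (linform a)"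
    using const_mem_ideal2_linform_iff[of c 0 a] assms(2) by simp
  ultimately show ?thesis
    using assms(3) by (auto simp: ideal2_0_left dest: prime_idealD)
qed

lemma not_mem_coker_rel_of_components:
  assumes p: "prime p" and prim: "primitive (a i1)" and "i1 < n" "i2 < n"
    and a2: "a i2 = (\<lambda>j. \<beta> * a i1 j + p ^ Suc e * u j)"
    and v: "v i1 = 0" "v i2 = const (p ^ e * t0) * R"
    and t0: "\<not> p dvd t0" and R: "R \<notin> ideal2 (const p) (linform (a i1))"
  shows "v \<notin> coker_rel n a"
proof
  assume "v \<in> coker_rel n a"
  then obtain h g where hg: "\<forall>i<n. v i = h i * linform (a i) + subst_mp g (linform (a i))"
    by (auto simp: coker_rel_eq)
  let ?\<alpha>1 = "linform (a i1)" and ?\<alpha>u = "linform u"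
  from a2 have \<alpha>2: "linform (a i2) = const \<beta> * ?\<alpha>1 + const (p ^ Suc e) * ?\<alpha>u"
    by (simp add: linform_lincomb)
  have \<alpha>1_at_g: "subst_mp g ?\<alpha>1 = - h i1 * ?\<alpha>1"
    using hg \<open>i1 < n\<close> v(1) by (simp add: eq_neg_iff_add_eq_0 add.commute)
  define C where "C = h i2 * ?\<alpha>u + subst_mp g ?\<alpha>u"
  have "v i2 = h i2 * linform (a i2) + subst_mp g (linform (a i2))"
    using hg \<open>i2 < n\<close> by simp
  also have "\<dots> = ?\<alpha>1 * (const \<beta> * (h i2 - h i1)) + const (p ^ Suc e) * C"
    unfolding \<alpha>2 C_def by (simp add: subst_mp_add subst_mp_mult \<alpha>1_at_g algebra_simps)
  finally have "const (p ^ e * t0) * R - const (p ^ Suc e) * C = ?\<alpha>1 * (const \<beta> * (h i2 - h i1))"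
    using v(2) by simp
  moreover have "const (p ^ e * t0) * R - const (p ^ Suc e) * C =
      const (p ^ e) * (const t0 * R - const p * C)"
    by (simp add: const_eq_of_int algebra_simps)
  ultimately have "?\<alpha>1 dvd const (p ^ e) * (const t0 * R - const p * C)"
    by (metis dvd_triv_left)
  moreover have "p ^ e \<noteq> 0"
    using p by simp
  ultimately have "?\<alpha>1 dvd const t0 * R - const p * C"
    using linform_dvd_const_mult_cancel[OF prim] by blast
  then obtain D where "const t0 * R - const p * C = ?\<alpha>1 * D"
    by (elim dvdE)
  then have "const t0 * R = const p * C + ?\<alpha>1 * D"
    by (simp add: algebra_simps)
  then have "const t0 * R \<in> ideal2 (const p) ?\<alpha>1"
    by (auto simp: ideal2_def)
  with const_mult_notin_ideal2_linform[OF prim p t0 R] show False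
    by blast
qed

lemma minor_as_linear_functional:
  fixes c :: "'v::finite \<Rightarrow> int"
  obtains G where "\<And>b. (\<Sum>t\<in>UNIV. b t * G t) = b j0 * c k0 - b k0 * c j0"
proof
  fix b :: "'v \<Rightarrow> int"
  show "(\<Sum>t\<in>UNIV. b t * ((if t = j0 then c k0 else 0) - (if t = k0 then c j0 else 0))) =
      b j0 * c k0 - b k0 * c j0"
    by (simp add: right_diff_distrib sum_subtractf if_distrib[of "\<lambda>x. b _ * x"] cong: if_cong)
qed

lemma proportional_mod_imp_dvd_minor:
  assumes "proportional_mod p c b"
  shows "p dvd b j0 * c k0 - b k0 * c j0"
proof -
  obtain \<mu> where \<mu>: "\<And>j. p dvd b j - \<mu> * c j"
    using assms by (auto simp: proportional_mod_def)
  have "b j0 * c k0 - b k0 * c j0 = (b j0 - \<mu> * c j0) * c k0 - (b k0 - \<mu> * c k0) * c j0"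
    by (simp add: algebra_simps)
  then show ?thesis
    using \<mu>[of j0] \<mu>[of k0] by simp
qed

lemma zero_divisor_coker_if_proportional_mod:
  assumes p: "prime p" and prim: "\<And>i. i < n \<Longrightarrow> primitive (a i)"
    and i12: "i1 < n" "i2 < n" "\<not> parallel (a i1) (a i2)" "proportional_mod p (a i1) (a i2)"
  shows "zero_divisor_coker p n a"
proof -
  let ?a1 = "a i1"
  obtain \<beta> e u where e: "a i2 = (\<lambda>j. \<beta> * ?a1 j + p ^ Suc e * u j)" "\<not> proportional_mod p ?a1 u"
    using p i12(3,4) by (rule proportional_mod_maximal_power)
  obtain j0 where j0: "\<not> p dvd ?a1 j0"
    using prim[OF i12(1)] p by (auto simp: primitive_def)
  obtain k0 where k0: "\<not> p dvd ?a1 j0 * u k0 - ?a1 k0 * u j0"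
    using not_proportional_mod_minor[OF p j0 e(2)] by blast
  obtain G where N: "\<And>b. (\<Sum>t\<in>UNIV. b t * G t) = b j0 * ?a1 k0 - b k0 * ?a1 j0"
    using minor_as_linear_functional by blast
  define P where "P = {i. i < n \<and> proportional_mod p ?a1 (a i)}"
  define R where "R = (\<Prod>k\<in>{..<n} - P. linform (a k))"
  define v where "v i = (if i \<in> P then const ((\<Sum>t\<in>UNIV. a i t * G t) div p) * R else 0)" for i
  have N_dvd: "p dvd (\<Sum>t\<in>UNIV. a i t * G t)" if "i \<in> P" for i
    using that proportional_mod_imp_dvd_minor by (auto simp: N P_def)
  have "(\<lambda>i. const p * v i) \<in> coker_rel n a"
    unfolding v_def R_def using N_dvd by (rule torsion_candidate_mem_coker_rel)
  moreover have "v \<notin> coker_rel n a"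
  proof (rule not_mem_coker_rel_of_components[OF p prim[OF i12(1)] i12(1,2) e(1)])
    have "i1 \<in> P" "i2 \<in> P"
      using i12(1,2,4) by (auto simp: P_def proportional_mod_def intro: exI[of _ 1])
    then show "v i1 = 0"
      by (simp add: v_def N)
    have "(\<Sum>t\<in>UNIV. a i2 t * G t) = p * (p ^ e * (u j0 * ?a1 k0 - u k0 * ?a1 j0))"
      unfolding N e(1) by (simp add: algebra_simps)
    then show "v i2 = const (p ^ e * (u j0 * ?a1 k0 - u k0 * ?a1 j0)) * R"
      using \<open>i2 \<in> P\<close> p by (simp add: v_def)
    show "\<not> p dvd u j0 * ?a1 k0 - u k0 * ?a1 j0"
      using k0 by (simp add: dvd_diff_commute mult.commute)
    show "R \<notin> ideal2 (const p) (linform ?a1)"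
      unfolding R_def using prim[OF i12(1)] p by (intro prod_linform_notin_ideal2) (auto simp: P_def)
  qed
  ultimately show ?thesis
    unfolding zero_divisor_coker_def by blast
qed

lemma zero_divisor_quot_imp_coker:
  assumes p: "prime p" and prim: "\<And>i. i < n \<Longrightarrow> primitive (a i)"
    and not_parallel: "\<And>i k. i < n \<Longrightarrow> k < n \<Longrightarrow> i \<noteq> k \<Longrightarrow> \<not> parallel (a i) (a k)"
    and "zero_divisor_quot p (jac_ideal n a)"
  shows "zero_divisor_coker p n a"
proof (cases "\<exists>i1 i2. i1 < n \<and> i2 < n \<and> i1 \<noteq> i2 \<and> proportional_mod p (a i1) (a i2)")
  case True
  then obtain i1 i2 where "i1 < n" "i2 < n" "i1 \<noteq> i2" "proportional_mod p (a i1) (a i2)"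
    by blast
  then show ?thesis
    using not_parallel by (intro zero_divisor_coker_if_proportional_mod[where n=n and a=a, OF p prim]) auto
next
  case False
  obtain f where f: "f \<notin> jac_ideal n a" "const p * f \<in> jac_ideal n a"
    using assms(4) by (auto simp: zero_divisor_quot_def)
  then have "const p * f \<in> cofactor_ideal n a"
    by (auto simp: jac_ideal_eq cofactor_ideal_def)
  then have "f \<in> cofactor_ideal n a"
    using cofactor_ideal_saturated[where n=n and a=a, OF p prim] False by blast
  then obtain c w where f_eq: "f = c * defpoly n a + cofactor_sum n a w"
    by (auto simp: cofactor_ideal_def)
  have "w \<notin> coker_rel n a"
    using f(1) mem_jac_ideal_iff[where n=n and a=a, OF prim not_parallel] f_eq by blast
  moreover have "(\<lambda>i. const p * w i) \<in> coker_rel n a"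
    using f(2) f_eq mem_jac_ideal_iff[where c="const p * c" and w="\<lambda>i. const p * w i", OF prim not_parallel]
    by (simp add: cofactor_sum_const_mult algebra_simps)
  ultimately show ?thesis
    unfolding zero_divisor_coker_def by blast
qed

theorem proposition4p9:
  fixes n :: nat and a :: "nat \<Rightarrow> 'v::finite \<Rightarrow> int" and p :: int
  assumes nonzero: "\<forall>i<n. linform (a i) \<noteq> 0"
    and distinct_hyps: "\<forall>i<n. \<forall>k<n. i \<noteq> k \<longrightarrow> hyperplane (a i) \<noteq> hyperplane (a k)"
    and primitive: "\<forall>i<n. \<forall>q::int. prime q \<longrightarrow> \<not> const q dvd linform (a i)"
    and good: "good_prime p n a"
  shows "zero_divisor_quot p (jac_ideal n a) \<longleftrightarrow> zero_divisor_coker p n a"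
proof -
  have p: "prime p"
    using good by (simp add: good_prime_def)
  have prim: "primitive (a i)" if "i < n" for i
    using primitive that by (simp add: primitive_iff_not_const_dvd)
  have not_parallel: "\<not> parallel (a i) (a k)" if "i < n" "k < n" "i \<noteq> k" for i k
    using nonzero distinct_hyps that by (intro not_parallel_if_hyperplane_neq) auto
  show ?thesis
    using zero_divisor_quot_imp_coker[where n=n and a=a, OF p prim not_parallel]
      zero_divisor_coker_imp_quot[where n=n and a=a, OF prim not_parallel]
    by blast
qed

end
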